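(* Let $\Theta\subset\mathbb R^m$ be bounded and for each $n$ let $\{\Pi_n(\theta)\}_{\theta\in\Theta}$ be a family of $n\times n$ real matrices such that: (a) $M:=\sup_n\sup_{\theta\in\Theta}\|\Pi_n(\theta)\|_{op}<\infty$; (b) there is $C>0$ with $\|\Pi_n(\theta_2)-\Pi_n(\theta_1)\|_{op}\le C\|\theta_2-\theta_1\|_2$ for all $n$ and $\theta_1,\theta_2\in\Theta$; (c) for every $\theta\in\Theta$, $\|\Pi_n(\theta)\|_{op}/\|\Pi_n(\theta)\|_F=o(1/\sqrt{\ln n})$ as $n\to\infty$. Let $Z\in\mathbb R^n$ be a standard Gaussian vector. Then there is a constant $C'>0$ such that $$\lim_{n\to\infty}\Pr\Big(\sup_{\theta\in\Theta}\big|Z^\top\Pi_n(\theta)Z-\operatorname{tr}\Pi_n(\theta)\big|\ge C'\sqrt{n\ln n}\Big)=0.$$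
   Context: $\|\cdot\|_{op}$ denotes the spectral norm and $\|\cdot\|_F$ the Frobenius norm. *)

theory Defs
  imports "HOL-Probability.Probability" "HOL-Library.Landau_Symbols"
begin

text \<open>An n x n real matrix is represented as a function A :: nat => nat => real,
  of which only the entries A i j with i, j < n are relevant; vectors of R^n are
  functions nat => real of which only the coordinates j < n are relevant.\<close>

definition mat_vec_norm :: "nat \<Rightarrow> (nat \<Rightarrow> nat \<Rightarrow> real) \<Rightarrow> (nat \<Rightarrow> real) \<Rightarrow> real" where
  "mat_vec_norm n A x = sqrt (\<Sum>i<n. (\<Sum>j<n. A i j * x j)\<^sup>2)"

definition op_norm :: "nat \<Rightarrow> (nat \<Rightarrow> nat \<Rightarrow> real) \<Rightarrow> real" where
  "op_norm n A = Sup {mat_vec_norm n A x | x. (\<Sum>j<n. (x j)\<^sup>2) \<le> 1}"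

definition frob_norm :: "nat \<Rightarrow> (nat \<Rightarrow> nat \<Rightarrow> real) \<Rightarrow> real" where
  "frob_norm n A = sqrt (\<Sum>i<n. \<Sum>j<n. (A i j)\<^sup>2)"

definition mat_trace :: "nat \<Rightarrow> (nat \<Rightarrow> nat \<Rightarrow> real) \<Rightarrow> real" where
  "mat_trace n A = (\<Sum>i<n. A i i)"

definition quad_form :: "nat \<Rightarrow> (nat \<Rightarrow> nat \<Rightarrow> real) \<Rightarrow> (nat \<Rightarrow> real) \<Rightarrow> real" where
  "quad_form n A z = (\<Sum>i<n. \<Sum>j<n. z i * A i j * z j)"

definition std_gauss_vec :: "nat \<Rightarrow> (nat \<Rightarrow> real) measure" where
  "std_gauss_vec n = PiM {..<n} (\<lambda>_. density lborel std_normal_density)"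

end

theory Submission
  imports Defs "HOL-Real_Asymp.Real_Asymp"
begin

text \<open>For a symmetric \<open>X\<close> with \<open>|u\<^sup>T X u| \<le> |u|\<^sup>2/4\<close>, integrating out one Gaussian coordinate at a
  time (completing the square in it) gives \<open>E exp(Z\<^sup>T X Z / 2) \<le> exp(tr X / 2 + \<parallel>X\<parallel>\<^sub>F\<^sup>2)\<close>. Applied to
  a multiple of \<open>\<Pi>\<close>, a Chernoff bound yields \<open>Pr(|Z\<^sup>T \<Pi> Z - tr \<Pi>| \<ge> t) \<le> 2 exp(-t\<^sup>2/(16 n M\<^sup>2))\<close>,
  because \<open>\<parallel>\<Pi>\<parallel>\<^sub>F\<^sup>2 \<le> n \<parallel>\<Pi>\<parallel>\<^sub>o\<^sub>p\<^sup>2\<close>. A grid of mesh \<open>1/n\<close> covers \<open>\<Theta>\<close> by polynomially many points;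
  at level \<open>t \<sim> C' \<surd>(n ln n)\<close> the union bound over the grid costs \<open>O(1/n)\<close>, and on the event
  \<open>|Z|\<^sup>2 < 2n\<close> the Lipschitz condition moves \<open>Z\<^sup>T \<Pi>(\<theta>) Z - tr \<Pi>(\<theta>)\<close> by only \<open>O(1)\<close> between
  a parameter and its nearest grid point. The crude bound \<open>\<parallel>\<Pi>\<parallel>\<^sub>F \<le> \<surd>n M\<close> already suffices at
  the scale \<open>\<surd>(n ln n)\<close>.\<close>

section \<open>Quadratic forms and the operator norm\<close>

definition vec_sq_norm :: "nat \<Rightarrow> (nat \<Rightarrow> real) \<Rightarrow> real" where
  "vec_sq_norm n u = (\<Sum>j<n. (u j)\<^sup>2)"

definition frob_sq :: "nat \<Rightarrow> (nat \<Rightarrow> nat \<Rightarrow> real) \<Rightarrow> real" where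
  "frob_sq n A = (\<Sum>i<n. \<Sum>j<n. (A i j)\<^sup>2)"

definition symmetric_mat :: "nat \<Rightarrow> (nat \<Rightarrow> nat \<Rightarrow> real) \<Rightarrow> bool" where
  "symmetric_mat n A \<longleftrightarrow> (\<forall>i<n. \<forall>j<n. A i j = A j i)"

definition unit_vec :: "nat \<Rightarrow> nat \<Rightarrow> real" where
  "unit_vec k = (\<lambda>j. if j = k then 1 else 0)"

lemma vec_sq_norm_nonneg: "0 \<le> vec_sq_norm n u"
  unfolding vec_sq_norm_def by (simp add: sum_nonneg)

lemma vec_sq_norm_scale: "vec_sq_norm n (\<lambda>j. c * u j) = c\<^sup>2 * vec_sq_norm n u"
  unfolding vec_sq_norm_def by (simp add: sum_distrib_left power_mult_distrib)

lemma vec_sq_norm_unit_vec: "k < n \<Longrightarrow> vec_sq_norm n (unit_vec k) = 1"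
  unfolding vec_sq_norm_def unit_vec_def
  by (simp add: if_distrib[of "\<lambda>x. x\<^sup>2"] sum.delta cong: if_cong)

lemma mat_vec_norm_sq: "(mat_vec_norm n A x)\<^sup>2 = (\<Sum>i<n. (\<Sum>j<n. A i j * x j)\<^sup>2)"
  unfolding mat_vec_norm_def by (simp add: sum_nonneg)

lemma mat_vec_norm_nonneg: "0 \<le> mat_vec_norm n A x"
  unfolding mat_vec_norm_def by (simp add: sum_nonneg)

lemma mat_vec_norm_scale: "mat_vec_norm n A (\<lambda>j. c * x j) = \<bar>c\<bar> * mat_vec_norm n A x"
proof -
  have "(\<Sum>i<n. (\<Sum>j<n. A i j * (c * x j))\<^sup>2) = c\<^sup>2 * (\<Sum>i<n. (\<Sum>j<n. A i j * x j)\<^sup>2)"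
    by (simp add: sum_distrib_left[symmetric] power_mult_distrib mult_ac)
  then show ?thesis unfolding mat_vec_norm_def by (simp add: real_sqrt_mult)
qed

lemma mat_vec_norm_unit_vec_sq: "k < n \<Longrightarrow> (mat_vec_norm n A (unit_vec k))\<^sup>2 = (\<Sum>i<n. (A i k)\<^sup>2)"
  unfolding mat_vec_norm_sq unit_vec_def
  by (simp add: if_distrib[of "\<lambda>x. _ * x"] sum.delta cong: if_cong)

lemma mat_vec_norm_le_frob: "mat_vec_norm n A x \<le> frob_norm n A * sqrt (vec_sq_norm n x)"
proof -
  have "(\<Sum>i<n. (\<Sum>j<n. A i j * x j)\<^sup>2) \<le> (\<Sum>i<n. (\<Sum>j<n. (A i j)\<^sup>2) * vec_sq_norm n x)"
    unfolding vec_sq_norm_def by (intro sum_mono Cauchy_Schwarz_ineq_sum)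
  then have "sqrt (\<Sum>i<n. (\<Sum>j<n. A i j * x j)\<^sup>2) \<le> sqrt ((\<Sum>i<n. \<Sum>j<n. (A i j)\<^sup>2) * vec_sq_norm n x)"
    by (simp add: sum_distrib_right)
  then show ?thesis unfolding mat_vec_norm_def frob_norm_def by (simp add: real_sqrt_mult)
qed

lemma bdd_above_mat_vec_norm: "bdd_above {mat_vec_norm n A x | x. (\<Sum>j<n. (x j)\<^sup>2) \<le> 1}"
proof (rule bdd_aboveI)
  fix y assume "y \<in> {mat_vec_norm n A x | x. (\<Sum>j<n. (x j)\<^sup>2) \<le> 1}"
  then obtain x where y: "y = mat_vec_norm n A x" and x: "vec_sq_norm n x \<le> 1"
    unfolding vec_sq_norm_def by auto
  have "y \<le> frob_norm n A * sqrt (vec_sq_norm n x)" using mat_vec_norm_le_frob y by simp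
  also have "\<dots> \<le> frob_norm n A"
    using x vec_sq_norm_nonneg[of n x]
    by (intro mult_left_le) (auto simp: frob_norm_def sum_nonneg)
  finally show "y \<le> frob_norm n A" .
qed

lemma mat_vec_norm_le_op_norm_unit: "vec_sq_norm n x \<le> 1 \<Longrightarrow> mat_vec_norm n A x \<le> op_norm n A"
  unfolding op_norm_def using bdd_above_mat_vec_norm
  by (intro cSup_upper) (auto simp: vec_sq_norm_def)

lemma op_norm_nonneg: "0 \<le> op_norm n A"
  using mat_vec_norm_le_op_norm_unit[of n "\<lambda>_. 0" A] mat_vec_norm_nonneg[of n A "\<lambda>_. 0"]
  by (simp add: vec_sq_norm_def)

lemma mat_vec_norm_le_op_norm: "mat_vec_norm n A x \<le> op_norm n A * sqrt (vec_sq_norm n x)"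
proof (cases "vec_sq_norm n x = 0")
  case True
  then have "\<forall>j<n. x j = 0"
    unfolding vec_sq_norm_def by (subst (asm) sum_nonneg_eq_0_iff) auto
  then show ?thesis using True unfolding mat_vec_norm_def by simp
next
  case False
  define r where "r = sqrt (vec_sq_norm n x)"
  have r: "r > 0" using False vec_sq_norm_nonneg[of n x] by (simp add: r_def)
  have "vec_sq_norm n (\<lambda>j. (1 / r) * x j) = 1"
    unfolding vec_sq_norm_scale using r vec_sq_norm_nonneg[of n x] by (simp add: power_divide r_def)
  then have "mat_vec_norm n A (\<lambda>j. (1 / r) * x j) \<le> op_norm n A"
    by (intro mat_vec_norm_le_op_norm_unit) simp
  then show ?thesis using r unfolding mat_vec_norm_scale by (simp add: r_def[symmetric] field_simps)
qed

lemma quad_form_eq_inner: "quad_form n A u = (\<Sum>i<n. u i * (\<Sum>j<n. A i j * u j))"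
  unfolding quad_form_def by (simp add: sum_distrib_left mult_ac)

lemma abs_quad_form_le_op_norm: "\<bar>quad_form n A u\<bar> \<le> op_norm n A * vec_sq_norm n u"
proof -
  have "(quad_form n A u)\<^sup>2 \<le> vec_sq_norm n u * (mat_vec_norm n A u)\<^sup>2"
    unfolding quad_form_eq_inner vec_sq_norm_def mat_vec_norm_sq by (rule Cauchy_Schwarz_ineq_sum)
  also have "\<dots> \<le> vec_sq_norm n u * (op_norm n A * sqrt (vec_sq_norm n u))\<^sup>2"
    by (intro mult_left_mono power_mono mat_vec_norm_le_op_norm mat_vec_norm_nonneg vec_sq_norm_nonneg)
  also have "\<dots> = (op_norm n A * vec_sq_norm n u)\<^sup>2"
    using vec_sq_norm_nonneg[of n u] by (simp add: power_mult_distrib power2_eq_square)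
  finally have "\<bar>quad_form n A u\<bar> \<le> \<bar>op_norm n A * vec_sq_norm n u\<bar>"
    by (simp only: abs_le_square_iff)
  then show ?thesis using op_norm_nonneg[of n A] vec_sq_norm_nonneg[of n u] by simp
qed

lemma quad_form_unit_vec: "k < n \<Longrightarrow> quad_form n A (unit_vec k) = A k k"
  unfolding quad_form_def unit_vec_def
  by (simp add: if_distrib[of "\<lambda>x. _ * x"] if_distrib[of "\<lambda>x. x * _"] sum.delta cong: if_cong)

lemma frob_sq_le_op_norm: "frob_sq n A \<le> real n * (op_norm n A)\<^sup>2"
proof -
  have "frob_sq n A = (\<Sum>k<n. \<Sum>i<n. (A i k)\<^sup>2)" unfolding frob_sq_def by (rule sum.swap)
  also have "\<dots> = (\<Sum>k<n. (mat_vec_norm n A (unit_vec k))\<^sup>2)"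
    by (intro sum.cong) (auto simp: mat_vec_norm_unit_vec_sq)
  also have "\<dots> \<le> (\<Sum>k<n. (op_norm n A)\<^sup>2)"
    by (intro sum_mono power_mono mat_vec_norm_le_op_norm_unit mat_vec_norm_nonneg)
      (simp add: vec_sq_norm_unit_vec)
  finally show ?thesis by simp
qed

lemma abs_trace_le_op_norm: "\<bar>mat_trace n A\<bar> \<le> real n * op_norm n A"
proof -
  have "\<bar>mat_trace n A\<bar> \<le> (\<Sum>k<n. \<bar>A k k\<bar>)" unfolding mat_trace_def by (rule sum_abs)
  also have "\<dots> \<le> (\<Sum>k<n. op_norm n A)"
    by (intro sum_mono) (metis abs_quad_form_le_op_norm lessThan_iff mult_1_right
        quad_form_unit_vec vec_sq_norm_unit_vec)
  finally show ?thesis by simp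
qed

lemma quad_form_scale: "quad_form n (\<lambda>i j. c * A i j) z = c * quad_form n A z"
  unfolding quad_form_def by (simp add: sum_distrib_left mult_ac)

lemma quad_form_add: "quad_form n (\<lambda>i j. A i j + B i j) z = quad_form n A z + quad_form n B z"
  unfolding quad_form_def by (simp add: sum.distrib algebra_simps)

lemma quad_form_diff: "quad_form n (\<lambda>i j. A i j - B i j) z = quad_form n A z - quad_form n B z"
  unfolding quad_form_def by (simp add: sum_subtractf algebra_simps)

lemma quad_form_neg: "quad_form n (\<lambda>i j. - A i j) z = - quad_form n A z"
  using quad_form_scale[of n "-1" A z] by simp

lemma quad_form_transpose: "quad_form n (\<lambda>i j. A j i) z = quad_form n A z"
  unfolding quad_form_def by (subst sum.swap) (simp add: mult_ac)

lemma mat_trace_diff: "mat_trace n (\<lambda>i j. A i j - B i j) = mat_trace n A - mat_trace n B"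
  unfolding mat_trace_def by (simp add: sum_subtractf)

lemma mat_trace_neg: "mat_trace n (\<lambda>i j. - A i j) = - mat_trace n A"
  unfolding mat_trace_def by (simp add: sum_negf)

lemma op_norm_neg: "op_norm n (\<lambda>i j. - A i j) = op_norm n A"
  unfolding op_norm_def mat_vec_norm_def by (simp add: sum_negf power2_minus)

lemma abs_centered_quad_form_diff_le:
  "\<bar>(quad_form n A z - mat_trace n A) - (quad_form n B z - mat_trace n B)\<bar>
     \<le> op_norm n (\<lambda>i j. A i j - B i j) * (vec_sq_norm n z + real n)"
proof -
  let ?D = "\<lambda>i j. A i j - B i j"
  have "\<bar>(quad_form n A z - mat_trace n A) - (quad_form n B z - mat_trace n B)\<bar>
      \<le> \<bar>quad_form n ?D z\<bar> + \<bar>mat_trace n ?D\<bar>"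
    unfolding quad_form_diff mat_trace_diff by linarith
  also have "\<dots> \<le> op_norm n ?D * vec_sq_norm n z + real n * op_norm n ?D"
    by (intro add_mono abs_quad_form_le_op_norm abs_trace_le_op_norm)
  finally show ?thesis by (simp add: algebra_simps)
qed

section \<open>The Gaussian moment generating function of a quadratic form\<close>

abbreviation std_normal :: "real measure" where
  "std_normal \<equiv> density lborel std_normal_density"

lemma prob_space_std_normal: "prob_space std_normal"
  using prob_space_normal_density by simp

lemma prob_space_std_gauss_vec: "prob_space (std_gauss_vec n)"
  unfolding std_gauss_vec_def by (rule prob_space_PiM) (simp add: prob_space_std_normal)

lemma nn_integral_std_gauss_vec_Suc:
  assumes "f \<in> borel_measurable (std_gauss_vec (Suc n))"
  shows "(\<integral>\<^sup>+z. f z \<partial>std_gauss_vec (Suc n))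
       = (\<integral>\<^sup>+x. (\<integral>\<^sup>+y. f (x(n := y)) \<partial>std_normal) \<partial>std_gauss_vec n)"
proof -
  interpret product_sigma_finite "\<lambda>_::nat. std_normal"
  proof -
    interpret prob_space std_normal by (rule prob_space_std_normal)
    show "product_sigma_finite (\<lambda>_::nat. std_normal)" by unfold_locales
  qed
  show ?thesis
    using assms unfolding std_gauss_vec_def lessThan_Suc
    by (intro product_nn_integral_insert) auto
qed

lemma measurable_component_std_gauss:
  "j \<in> I \<Longrightarrow> (\<lambda>x. x j) \<in> borel_measurable (PiM I (\<lambda>_. std_normal))"
  using measurable_component_singleton[of j I "\<lambda>_. std_normal"]
  by (simp cong: measurable_cong_sets)

lemma measurable_quad_form:
  "{..<n} \<subseteq> I \<Longrightarrow> quad_form n X \<in> borel_measurable (PiM I (\<lambda>_. std_normal))"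
  unfolding quad_form_def
  by (intro borel_measurable_sum borel_measurable_times measurable_component_std_gauss
      borel_measurable_const) auto

lemma measurable_exp_half_quad_form:
  "{..<n} \<subseteq> I \<Longrightarrow>
    (\<lambda>z. ennreal (exp (quad_form n X z / 2))) \<in> borel_measurable (PiM I (\<lambda>_. std_normal))"
  using measurable_quad_form[of n I X] by measurable

lemma nn_integral_std_normal_exp_quadratic:
  fixes a w :: real
  assumes "a < 1"
  shows "(\<integral>\<^sup>+y. ennreal (exp (a * y\<^sup>2 / 2 + w * y)) \<partial>std_normal)
       = ennreal (exp (w\<^sup>2 / (2 * (1 - a))) / sqrt (1 - a))"
proof -
  define s where "s = 1 - a"
  have s: "s > 0" using assms by (simp add: s_def)
  define K where "K = exp (w\<^sup>2 / (2 * s)) / sqrt s"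
  have K: "K \<ge> 0" using s by (simp add: K_def)
  have density_eq: "std_normal_density y * exp (a * y\<^sup>2 / 2 + w * y)
      = K * normal_density (w / s) (1 / sqrt s) y" for y
  proof -
    have sq: "(1 / sqrt s)\<^sup>2 = 1 / s" using s by (simp add: power_divide)
    have a: "a = 1 - s" by (simp add: s_def)
    have "- y\<^sup>2 / 2 + (a * y\<^sup>2 / 2 + w * y)
        = w\<^sup>2 / (2 * s) + (-(y - w / s)\<^sup>2 / (2 * (1 / sqrt s)\<^sup>2))"
      unfolding sq a using s by (simp add: power2_eq_square field_simps)
    then have "exp (- y\<^sup>2 / 2) * exp (a * y\<^sup>2 / 2 + w * y)
       = exp (w\<^sup>2 / (2 * s)) * exp (-(y - w / s)\<^sup>2 / (2 * (1 / sqrt s)\<^sup>2))"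
      by (simp flip: exp_add)
    moreover have "sqrt (2 * pi * (1 / sqrt s)\<^sup>2) = sqrt (2 * pi) / sqrt s"
      using s by (simp add: real_sqrt_divide real_sqrt_mult power_divide)
    ultimately show ?thesis
      unfolding normal_density_def K_def std_normal_density_def using s by (simp add: field_simps)
  qed
  have "(\<integral>\<^sup>+y. ennreal (exp (a * y\<^sup>2 / 2 + w * y)) \<partial>std_normal)
      = (\<integral>\<^sup>+y. ennreal K * ennreal (normal_density (w / s) (1 / sqrt s) y) \<partial>lborel)"
    by (subst nn_integral_density)
      (auto intro!: nn_integral_cong simp: density_eq K simp flip: ennreal_mult')
  also have "\<dots> = ennreal K"
    using s by (subst nn_integral_cmult) (auto simp: nn_integral_eq_integral)
  finally show ?thesis by (simp add: K_def s_def)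
qed

definition quarter_bounded :: "nat \<Rightarrow> (nat \<Rightarrow> nat \<Rightarrow> real) \<Rightarrow> bool" where
  "quarter_bounded n X \<longleftrightarrow> (\<forall>u. \<bar>quad_form n X u\<bar> \<le> vec_sq_norm n u / 4)"

text \<open>Integrating \<open>exp(z\<^sup>T X z / 2)\<close> over the last coordinate \<open>z\<^sub>n\<close> of an \<open>(n+1)\<times>(n+1)\<close> matrix \<open>X\<close>
  leaves \<open>exp(x\<^sup>T Y x / 2) / \<surd>(1 - X\<^sub>n\<^sub>n)\<close> with \<open>Y = complete_square n X\<close>.\<close>

definition complete_square :: "nat \<Rightarrow> (nat \<Rightarrow> nat \<Rightarrow> real) \<Rightarrow> nat \<Rightarrow> nat \<Rightarrow> real" where
  "complete_square n X = (\<lambda>i j. X i j + X n i * X n j / (1 - X n n))"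

lemma quad_form_Suc_fun_upd:
  assumes "symmetric_mat (Suc n) X"
  shows "quad_form (Suc n) X (x(n := y))
       = quad_form n X x + 2 * y * (\<Sum>i<n. X n i * x i) + X n n * y\<^sup>2"
proof -
  have row: "(\<Sum>i<n. x i * X i n * y) = y * (\<Sum>i<n. X n i * x i)"
    using assms unfolding sum_distrib_left symmetric_mat_def
    by (intro sum.cong refl) (auto simp: mult_ac)
  have col: "(\<Sum>j<n. y * X n j * x j) = y * (\<Sum>i<n. X n i * x i)"
    unfolding sum_distrib_left by (intro sum.cong refl) (auto simp: mult_ac)
  have "quad_form (Suc n) X (x(n := y))
      = quad_form n X x + (\<Sum>i<n. x i * X i n * y) + ((\<Sum>j<n. y * X n j * x j) + y * X n n * y)"
    unfolding quad_form_def by (simp add: sum.distrib)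
  then show ?thesis unfolding row col by (simp add: power2_eq_square algebra_simps)
qed

lemma vec_sq_norm_Suc_fun_upd: "vec_sq_norm (Suc n) (x(n := y)) = vec_sq_norm n x + y\<^sup>2"
  unfolding vec_sq_norm_def by simp

lemma mat_trace_Suc: "mat_trace (Suc n) X = mat_trace n X + X n n"
  unfolding mat_trace_def by simp

lemma frob_sq_Suc:
  assumes "symmetric_mat (Suc n) X"
  shows "frob_sq (Suc n) X = frob_sq n X + 2 * vec_sq_norm n (X n) + (X n n)\<^sup>2"
proof -
  have "(\<Sum>i<n. (X i n)\<^sup>2) = vec_sq_norm n (X n)"
    using assms unfolding vec_sq_norm_def symmetric_mat_def by (intro sum.cong refl) auto
  then show ?thesis unfolding frob_sq_def vec_sq_norm_def by (simp add: sum.distrib)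
qed

lemma quad_form_rank_one_update:
  "quad_form n (\<lambda>i j. X i j + v i * v j / s) u = quad_form n X u + (\<Sum>i<n. v i * u i)\<^sup>2 / s"
proof -
  have "(\<Sum>i<n. v i * u i)\<^sup>2 / s = (\<Sum>i<n. \<Sum>j<n. u i * (v i * v j / s) * u j)"
    unfolding power2_eq_square sum_product sum_divide_distrib
    by (intro sum.cong refl) (simp add: field_simps)
  then show ?thesis unfolding quad_form_def by (simp add: algebra_simps sum.distrib)
qed

lemma mat_trace_rank_one_update:
  "mat_trace n (\<lambda>i j. X i j + v i * v j / s) = mat_trace n X + vec_sq_norm n v / s"
  unfolding mat_trace_def vec_sq_norm_def
  by (simp add: sum.distrib sum_divide_distrib power2_eq_square)

lemma frob_sq_rank_one_update:
  "frob_sq n (\<lambda>i j. X i j + v i * v j / s)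
     = frob_sq n X + 2 * quad_form n X v / s + (vec_sq_norm n v)\<^sup>2 / s\<^sup>2"
proof -
  have cross: "(\<Sum>i<n. \<Sum>j<n. 2 * (X i j * (v i * v j / s))) = 2 * quad_form n X v / s"
    unfolding quad_form_def sum_distrib_left sum_divide_distrib
    by (intro sum.cong refl) (simp add: field_simps)
  have square: "(\<Sum>i<n. \<Sum>j<n. (v i * v j / s)\<^sup>2) = (vec_sq_norm n v)\<^sup>2 / s\<^sup>2"
    unfolding vec_sq_norm_def power2_eq_square sum_product sum_divide_distrib
    by (intro sum.cong refl) (simp add: field_simps)
  have "frob_sq n (\<lambda>i j. X i j + v i * v j / s)
     = (\<Sum>i<n. \<Sum>j<n. (X i j)\<^sup>2 + 2 * (X i j * (v i * v j / s)) + (v i * v j / s)\<^sup>2)"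
    unfolding frob_sq_def by (intro sum.cong refl) (simp add: power2_sum)
  then show ?thesis unfolding sum.distrib frob_sq_def cross square .
qed

lemma symmetric_mat_complete_square:
  "symmetric_mat (Suc n) X \<Longrightarrow> symmetric_mat n (complete_square n X)"
  unfolding symmetric_mat_def complete_square_def by (auto simp: mult.commute)

lemma quarter_bounded_SucD:
  assumes "symmetric_mat (Suc n) X" and "quarter_bounded (Suc n) X"
  shows "\<bar>quad_form n X u + 2 * t * (\<Sum>i<n. X n i * u i) + X n n * t\<^sup>2\<bar>
       \<le> (vec_sq_norm n u + t\<^sup>2) / 4"
  using assms(2) quad_form_Suc_fun_upd[OF assms(1), of u t] vec_sq_norm_Suc_fun_upd[of n u t]
  unfolding quarter_bounded_def by metis

lemma quarter_bounded_pivot: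
  assumes sym: "symmetric_mat (Suc n) X" and qb: "quarter_bounded (Suc n) X"
  shows "\<bar>X n n\<bar> \<le> 1/4"
    and "\<bar>quad_form n X (X n)\<bar> \<le> vec_sq_norm n (X n) / 4"
    and "vec_sq_norm n (X n) \<le> 1/3"
proof -
  note bound = quarter_bounded_SucD[OF sym qb]
  show a: "\<bar>X n n\<bar> \<le> 1/4"
    using bound[of "\<lambda>_. 0" 1] by (simp add: quad_form_def vec_sq_norm_def)
  show q: "\<bar>quad_form n X (X n)\<bar> \<le> vec_sq_norm n (X n) / 4"
    using bound[of "X n" 0] by simp
  have "(\<Sum>i<n. X n i * X n i) = vec_sq_norm n (X n)"
    unfolding vec_sq_norm_def by (simp add: power2_eq_square)
  then have "\<bar>quad_form n X (X n) + 2 * vec_sq_norm n (X n) + X n n\<bar> \<le> (vec_sq_norm n (X n) + 1) / 4"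
    using bound[of "X n" 1] by simp
  then show "vec_sq_norm n (X n) \<le> 1/3" using a q unfolding abs_le_iff by (simp add: field_simps)
qed

lemma quarter_bounded_complete_square:
  assumes sym: "symmetric_mat (Suc n) X" and qb: "quarter_bounded (Suc n) X"
  shows "quarter_bounded n (complete_square n X)"
  unfolding quarter_bounded_def
proof
  fix u
  define a where "a = X n n"
  define s where "s = 1 - a"
  define w where "w = (\<Sum>i<n. X n i * u i)"
  note bound = quarter_bounded_SucD[OF sym qb, of u, folded a_def w_def]
  have s: "s > 0" using quarter_bounded_pivot(1)[OF sym qb] by (simp add: s_def a_def)
  have Y: "quad_form n (complete_square n X) u = quad_form n X u + w\<^sup>2 / s"
    unfolding complete_square_def quad_form_rank_one_update s_def a_def w_def ..
  have "- (vec_sq_norm n u / 4) \<le> quad_form n X u" using bound[of 0] by simp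
  moreover have "0 \<le> w\<^sup>2 / s" using s by simp
  moreover have "quad_form n X u + w\<^sup>2 / s \<le> vec_sq_norm n u / 4"
  proof -
    define t where "t = w / s"
    \<comment> \<open>at this \<open>t\<close> the form of \<open>X\<close> at \<open>u(n := t)\<close> equals
      the form of \<open>complete_square n X\<close> at \<open>u\<close> plus \<open>t\<^sup>2\<close>\<close>
    have w: "w = s * t" using s by (simp add: t_def)
    have "quad_form n X u + 2 * t * w + a * t\<^sup>2 \<le> (vec_sq_norm n u + t\<^sup>2) / 4"
      using abs_le_D1[OF bound[of t]] .
    moreover have "2 * t * w + a * t\<^sup>2 = w * t + t\<^sup>2"
      unfolding w s_def by (simp add: algebra_simps power2_eq_square)
    moreover have "w\<^sup>2 / s = w * t" using s by (simp add: w power2_eq_square)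
    ultimately show ?thesis using zero_le_power2[of t] unfolding add_divide_distrib by linarith
  qed
  ultimately show "\<bar>quad_form n (complete_square n X) u\<bar> \<le> vec_sq_norm n u / 4"
    unfolding Y by linarith
qed

lemma nn_integral_exp_quad_form_Suc:
  assumes sym: "symmetric_mat (Suc n) X" and a: "X n n < 1"
  shows "(\<integral>\<^sup>+z. ennreal (exp (quad_form (Suc n) X z / 2)) \<partial>std_gauss_vec (Suc n))
       = ennreal (1 / sqrt (1 - X n n))
           * (\<integral>\<^sup>+x. ennreal (exp (quad_form n (complete_square n X) x / 2)) \<partial>std_gauss_vec n)"
proof -
  define s where "s = 1 - X n n"
  have s: "s > 0" using a by (simp add: s_def)
  have inner: "(\<integral>\<^sup>+y. ennreal (exp (quad_form (Suc n) X (x(n := y)) / 2)) \<partial>std_normal)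
      = ennreal (1 / sqrt s) * ennreal (exp (quad_form n (complete_square n X) x / 2))" for x
  proof -
    define w where "w = (\<Sum>i<n. X n i * x i)"
    have split: "exp (quad_form (Suc n) X (x(n := y)) / 2)
        = exp (quad_form n X x / 2) * exp (X n n * y\<^sup>2 / 2 + w * y)" for y
      unfolding quad_form_Suc_fun_upd[OF sym] w_def by (simp flip: exp_add add: field_simps)
    have "(\<integral>\<^sup>+y. ennreal (exp (quad_form (Suc n) X (x(n := y)) / 2)) \<partial>std_normal)
        = ennreal (exp (quad_form n X x / 2)) * ennreal (exp (w\<^sup>2 / (2 * s)) / sqrt s)"
      unfolding split ennreal_mult'[OF exp_ge_zero] s_def using a
      by (subst nn_integral_cmult) (auto simp: nn_integral_std_normal_exp_quadratic)
    also have "\<dots> = ennreal (exp (quad_form n X x / 2) * (exp (w\<^sup>2 / (2 * s)) / sqrt s))"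
      by (rule ennreal_mult[symmetric]) (use s in auto)
    also have "exp (quad_form n X x / 2) * (exp (w\<^sup>2 / (2 * s)) / sqrt s)
        = 1 / sqrt s * exp (quad_form n (complete_square n X) x / 2)"
      unfolding complete_square_def quad_form_rank_one_update s_def[symmetric] w_def[symmetric]
      by (simp flip: exp_add add: add_divide_distrib)
    also have "\<dots> = ennreal (1 / sqrt s) * ennreal (exp (quad_form n (complete_square n X) x / 2))"
      by (rule ennreal_mult) (use s in auto)
    finally show ?thesis .
  qed
  have "(\<integral>\<^sup>+z. ennreal (exp (quad_form (Suc n) X z / 2)) \<partial>std_gauss_vec (Suc n))
     = (\<integral>\<^sup>+x. ennreal (1 / sqrt s) * ennreal (exp (quad_form n (complete_square n X) x / 2))
          \<partial>std_gauss_vec n)"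
    unfolding inner[symmetric] std_gauss_vec_def
    by (intro nn_integral_std_gauss_vec_Suc[unfolded std_gauss_vec_def]
        measurable_exp_half_quad_form) auto
  also have "\<dots> = ennreal (1 / sqrt s)
      * (\<integral>\<^sup>+x. ennreal (exp (quad_form n (complete_square n X) x / 2)) \<partial>std_gauss_vec n)"
    unfolding std_gauss_vec_def by (intro nn_integral_cmult measurable_exp_half_quad_form) auto
  finally show ?thesis unfolding s_def .
qed

lemma ln_one_minus_ge_quadratic:
  fixes a :: real
  assumes "\<bar>a\<bar> \<le> 1/4"
  shows "- ln (1 - a) / 2 - a / 2 \<le> a\<^sup>2"
proof (cases "a \<ge> 0")
  case True
  have "- a - 2 * a\<^sup>2 \<le> ln (1 - a)"
    by (rule ln_one_minus_pos_lower_bound) (use True assms in auto)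
  then show ?thesis by linarith
next
  case False
  have "(-a) - (-a)\<^sup>2 \<le> ln (1 + (-a))"
    by (rule ln_one_plus_pos_lower_bound) (use False assms in auto)
  then have "- a - a * a \<le> ln (1 - a)" by (simp add: power2_eq_square)
  then show ?thesis using zero_le_square[of a] unfolding power2_eq_square by linarith
qed

lemma mgf_exponent_step:
  fixes a q A T F :: real
  assumes a: "\<bar>a\<bar> \<le> 1/4" and q: "\<bar>q\<bar> \<le> A / 4" and A: "0 \<le> A" "A \<le> 1/3"
  shows "- ln (1 - a) / 2 + (T + A / (1 - a)) / 2 + (F + 2 * q / (1 - a) + A\<^sup>2 / (1 - a)\<^sup>2)
     \<le> (T + a) / 2 + (F + 2 * A + a\<^sup>2)"
proof -
  define s where "s = 1 - a"
  have s: "3/4 \<le> s" "s \<le> 5/4" using a by (auto simp: s_def)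
  have "A * s / 2 + 2 * q * s + A\<^sup>2 \<le> 2 * A * s\<^sup>2"
  proof -
    have "2 * q * s \<le> A / 4 * 2 * s" using q s by (intro mult_right_mono) auto
    moreover have "A\<^sup>2 \<le> A * (1/3)" unfolding power2_eq_square using A by (intro mult_left_mono) auto
    moreover have "s + 1/3 \<le> 2 * s\<^sup>2"
      using mult_right_mono[OF s(1), of s] s unfolding power2_eq_square by linarith
    then have "A * (s + 1/3) \<le> A * (2 * s\<^sup>2)" using A by (intro mult_left_mono) auto
    ultimately show ?thesis by (simp add: algebra_simps power2_eq_square)
  qed
  then have "(A * s / 2 + 2 * q * s + A\<^sup>2) / s\<^sup>2 \<le> 2 * A"
    using s by (simp add: divide_le_eq)
  moreover have "(A * s / 2 + 2 * q * s + A\<^sup>2) / s\<^sup>2 = A / s / 2 + 2 * q / s + A\<^sup>2 / s\<^sup>2"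
    using s by (simp add: field_simps power2_eq_square)
  ultimately have "A / (1 - a) / 2 + 2 * q / (1 - a) + A\<^sup>2 / (1 - a)\<^sup>2 \<le> 2 * A"
    unfolding s_def by simp
  moreover have "\<And>x y z L. x / 2 + y + z \<le> 2 * A \<Longrightarrow> - L / 2 - a / 2 \<le> a\<^sup>2 \<Longrightarrow>
      - L / 2 + (T + x) / 2 + (F + y + z) \<le> (T + a) / 2 + (F + 2 * A + a\<^sup>2)"
    by (drule (1) add_mono) (simp add: field_simps)
  ultimately show ?thesis using ln_one_minus_ge_quadratic[OF a] by blast
qed

lemma nn_integral_exp_half_quad_form_le:
  "symmetric_mat n X \<Longrightarrow> quarter_bounded n X \<Longrightarrow>
   (\<integral>\<^sup>+z. ennreal (exp (quad_form n X z / 2)) \<partial>std_gauss_vec n)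
     \<le> ennreal (exp (mat_trace n X / 2 + frob_sq n X))"
proof (induction n arbitrary: X)
  case 0
  show ?case unfolding std_gauss_vec_def
    by (simp add: quad_form_def mat_trace_def frob_sq_def PiM_empty)
next
  case (Suc n X)
  define a where "a = X n n"
  define A where "A = vec_sq_norm n (X n)"
  define q where "q = quad_form n X (X n)"
  define Y where "Y = complete_square n X"
  note pivot = quarter_bounded_pivot[OF Suc.prems, folded a_def A_def q_def]
  have A0: "0 \<le> A" unfolding A_def by (rule vec_sq_norm_nonneg)
  have s: "0 < 1 - a" using pivot(1) by simp
  have trY: "mat_trace n Y = mat_trace n X + A / (1 - a)"
    unfolding Y_def complete_square_def mat_trace_rank_one_update A_def a_def ..
  have frobY: "frob_sq n Y = frob_sq n X + 2 * q / (1 - a) + A\<^sup>2 / (1 - a)\<^sup>2"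
    unfolding Y_def complete_square_def frob_sq_rank_one_update q_def A_def a_def ..
  have "(\<integral>\<^sup>+z. ennreal (exp (quad_form (Suc n) X z / 2)) \<partial>std_gauss_vec (Suc n))
      = ennreal (1 / sqrt (1 - a)) * (\<integral>\<^sup>+x. ennreal (exp (quad_form n Y x / 2)) \<partial>std_gauss_vec n)"
    unfolding Y_def a_def using s by (intro nn_integral_exp_quad_form_Suc Suc.prems) (simp add: a_def)
  also have "\<dots> \<le> ennreal (1 / sqrt (1 - a)) * ennreal (exp (mat_trace n Y / 2 + frob_sq n Y))"
    unfolding Y_def
    by (intro mult_left_mono Suc.IH symmetric_mat_complete_square quarter_bounded_complete_square
        Suc.prems) simp
  also have "\<dots> = ennreal (exp (- ln (1 - a) / 2 + (mat_trace n Y / 2 + frob_sq n Y)))"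
  proof -
    have "exp (- ln (1 - a) / 2) = 1 / sqrt (1 - a)"
      using s by (simp add: ln_sqrt[symmetric] exp_minus inverse_eq_divide)
    then show ?thesis unfolding exp_add by (subst ennreal_mult) (use s in auto)
  qed
  also have "\<dots> \<le> ennreal (exp (mat_trace (Suc n) X / 2 + frob_sq (Suc n) X))"
    using mgf_exponent_step[OF pivot(1,2) A0 pivot(3), of "mat_trace n X" "frob_sq n X"]
    unfolding trY frobY mat_trace_Suc frob_sq_Suc[OF Suc.prems(1)] a_def[symmetric] A_def[symmetric]
    by (intro ennreal_leI) (simp add: add_divide_distrib add.assoc)
  finally show ?case .
qed

section \<open>Tail bounds for a single quadratic form\<close>

definition sym_part :: "(nat \<Rightarrow> nat \<Rightarrow> real) \<Rightarrow> nat \<Rightarrow> nat \<Rightarrow> real" where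
  "sym_part A = (\<lambda>i j. (A i j + A j i) / 2)"

lemma symmetric_mat_sym_part: "symmetric_mat n (sym_part A)"
  unfolding symmetric_mat_def sym_part_def by (simp add: add.commute)

lemma quad_form_sym_part: "quad_form n (sym_part A) z = quad_form n A z"
proof -
  have "sym_part A = (\<lambda>i j. (1/2) * (A i j + A j i))" unfolding sym_part_def by auto
  then have "quad_form n (sym_part A) z = (1/2) * (quad_form n A z + quad_form n (\<lambda>i j. A j i) z)"
    by (simp only: quad_form_scale quad_form_add)
  then show ?thesis unfolding quad_form_transpose[of n A z] by simp
qed

lemma mat_trace_sym_part: "mat_trace n (sym_part A) = mat_trace n A"
  unfolding sym_part_def mat_trace_def by simp

lemma frob_sq_sym_part_le: "frob_sq n (sym_part A) \<le> frob_sq n A"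
proof -
  have "frob_sq n (sym_part A) \<le> (\<Sum>i<n. \<Sum>j<n. ((A i j)\<^sup>2 + (A j i)\<^sup>2) / 2)"
    unfolding frob_sq_def sym_part_def
  proof (intro sum_mono)
    fix i j
    have "0 \<le> (A i j - A j i)\<^sup>2" by simp
    then show "((A i j + A j i) / 2)\<^sup>2 \<le> ((A i j)\<^sup>2 + (A j i)\<^sup>2) / 2"
      by (simp add: power2_eq_square field_simps)
  qed
  also have "\<dots> = (frob_sq n A + (\<Sum>i<n. \<Sum>j<n. (A j i)\<^sup>2)) / 2"
    unfolding frob_sq_def by (simp add: sum.distrib sum_divide_distrib add_divide_distrib)
  also have "(\<Sum>i<n. \<Sum>j<n. (A j i)\<^sup>2) = frob_sq n A"
    unfolding frob_sq_def by (rule sum.swap)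
  finally show ?thesis by simp
qed

lemma measurable_centered_quad_form:
  "(\<lambda>z. quad_form n A z - c) \<in> borel_measurable (std_gauss_vec n)"
  unfolding std_gauss_vec_def by (intro borel_measurable_diff measurable_quad_form) auto

lemma nn_integral_exp_centered_quad_form_le:
  assumes K: "\<forall>u. \<bar>quad_form n A u\<bar> \<le> K * vec_sq_norm n u"
    and F: "frob_sq n A \<le> F" and l: "0 \<le> l" "8 * l * K \<le> 1"
  shows "(\<integral>\<^sup>+z. ennreal (exp (l * (quad_form n A z - mat_trace n A))) \<partial>std_gauss_vec n)
          \<le> ennreal (exp (4 * l\<^sup>2 * F))"
proof -
  define X where "X = (\<lambda>i j. (2 * l) * sym_part A i j)"
  have qX: "quad_form n X z = 2 * l * quad_form n A z" for z
    unfolding X_def quad_form_scale quad_form_sym_part ..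
  have "quarter_bounded n X"
    unfolding quarter_bounded_def
  proof
    fix u
    have "(2 * l * K) * vec_sq_norm n u \<le> (1/4) * vec_sq_norm n u"
      using l by (intro mult_right_mono vec_sq_norm_nonneg) auto
    moreover have "2 * l * \<bar>quad_form n A u\<bar> \<le> 2 * l * (K * vec_sq_norm n u)"
      using K l by (intro mult_left_mono) auto
    moreover have "\<bar>quad_form n X u\<bar> = 2 * l * \<bar>quad_form n A u\<bar>"
      unfolding qX using l by (simp add: abs_mult)
    ultimately show "\<bar>quad_form n X u\<bar> \<le> vec_sq_norm n u / 4" by (simp add: mult.assoc)
  qed
  then have mgf: "(\<integral>\<^sup>+z. ennreal (exp (quad_form n X z / 2)) \<partial>std_gauss_vec n)
      \<le> ennreal (exp (mat_trace n X / 2 + frob_sq n X))"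
    using symmetric_mat_sym_part[of n A]
    by (intro nn_integral_exp_half_quad_form_le) (simp_all add: X_def symmetric_mat_def)
  have tr: "mat_trace n X = 2 * l * mat_trace n A"
    unfolding X_def mat_trace_def sym_part_def by (simp add: sum_distrib_left)
  have "frob_sq n X = 4 * l\<^sup>2 * frob_sq n (sym_part A)"
    unfolding X_def frob_sq_def by (simp add: sum_distrib_left power_mult_distrib)
  also have "\<dots> \<le> 4 * l\<^sup>2 * F"
    using frob_sq_sym_part_le[of n A] F by (intro mult_left_mono) auto
  finally have frob: "frob_sq n X \<le> 4 * l\<^sup>2 * F" .
  have "(\<integral>\<^sup>+z. ennreal (exp (l * (quad_form n A z - mat_trace n A))) \<partial>std_gauss_vec n)
      = (\<integral>\<^sup>+z. ennreal (exp (quad_form n X z / 2)) * ennreal (exp (- l * mat_trace n A)) \<partial>std_gauss_vec n)"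
  proof -
    have "exp (l * (quad_form n A z - mat_trace n A)) = exp (quad_form n X z / 2) * exp (- l * mat_trace n A)"
      for z unfolding qX exp_add[symmetric] by (simp add: algebra_simps)
    then show ?thesis by (simp add: ennreal_mult)
  qed
  also have "\<dots> = (\<integral>\<^sup>+z. ennreal (exp (quad_form n X z / 2)) \<partial>std_gauss_vec n)
      * ennreal (exp (- l * mat_trace n A))"
    unfolding std_gauss_vec_def by (intro nn_integral_multc measurable_exp_half_quad_form) auto
  also have "\<dots> \<le> ennreal (exp (mat_trace n X / 2 + frob_sq n X)) * ennreal (exp (- l * mat_trace n A))"
    by (intro mult_right_mono mgf) simp
  also have "\<dots> = ennreal (exp (frob_sq n X))"
    unfolding tr by (simp flip: ennreal_mult exp_add)
  also have "\<dots> \<le> ennreal (exp (4 * l\<^sup>2 * F))"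
    using frob by (intro ennreal_leI) simp
  finally show ?thesis .
qed

lemma prob_centered_quad_form_ge:
  assumes K: "\<forall>u. \<bar>quad_form n A u\<bar> \<le> K * vec_sq_norm n u"
    and F: "frob_sq n A \<le> F" "0 < F" and t: "0 < t" "t * K \<le> F"
  shows "measure (std_gauss_vec n) {z \<in> space (std_gauss_vec n). t \<le> quad_form n A z - mat_trace n A}
          \<le> exp (- t\<^sup>2 / (16 * F))"
proof -
  let ?G = "std_gauss_vec n"
  let ?Q = "\<lambda>z. quad_form n A z - mat_trace n A"
  interpret prob_space ?G by (rule prob_space_std_gauss_vec)
  define l where "l = t / (8 * F)"
  have l: "0 < l" using t F by (simp add: l_def)
  have "8 * l * K = t * K / F" using F by (simp add: l_def)
  then have lK: "8 * l * K \<le> 1" using t F by (simp add: divide_le_eq)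
  have Q_meas: "(\<lambda>z. ?Q z * indicator (space ?G) z) \<in> borel_measurable ?G"
    by (intro borel_measurable_times measurable_centered_quad_form borel_measurable_indicator) simp
  have "emeasure ?G {z \<in> space ?G. t \<le> ?Q z}
      \<le> ennreal (exp (- l * t)) * (\<integral>\<^sup>+z. ennreal (exp (l * ?Q z)) * indicator (space ?G) z \<partial>?G)"
    by (rule Chernoff_ineq_nn_integral_ge[OF l _ Q_meas]) simp
  also have "(\<integral>\<^sup>+z. ennreal (exp (l * ?Q z)) * indicator (space ?G) z \<partial>?G)
      = (\<integral>\<^sup>+z. ennreal (exp (l * ?Q z)) \<partial>?G)"
    by (intro nn_integral_cong) simp
  also have "ennreal (exp (- l * t)) * \<dots> \<le> ennreal (exp (- l * t)) * ennreal (exp (4 * l\<^sup>2 * F))"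
    using nn_integral_exp_centered_quad_form_le[OF K F(1) less_imp_le[OF l] lK]
    by (rule mult_left_mono) simp
  also have "\<dots> = ennreal (exp (- t\<^sup>2 / (16 * F)))"
  proof -
    have "- l * t + 4 * l\<^sup>2 * F = - t\<^sup>2 / (16 * F)"
      using F by (simp add: l_def power2_eq_square field_simps)
    then show ?thesis by (simp flip: ennreal_mult exp_add)
  qed
  finally have "emeasure ?G {z \<in> space ?G. t \<le> ?Q z} \<le> ennreal (exp (- t\<^sup>2 / (16 * F)))" .
  moreover have "{z \<in> space ?G. t \<le> ?Q z} \<in> events"
    using measurable_centered_quad_form[of n A "mat_trace n A"] unfolding borel_measurable_iff_ge by blast
  ultimately show ?thesis by (simp add: emeasure_eq_measure)
qed

lemma prob_abs_centered_quad_form_ge: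
  assumes M: "op_norm n A \<le> M" and t: "0 < t" "t \<le> real n * M"
  shows "measure (std_gauss_vec n) {z \<in> space (std_gauss_vec n). t \<le> \<bar>quad_form n A z - mat_trace n A\<bar>}
          \<le> 2 * exp (- t\<^sup>2 / (16 * (real n * M\<^sup>2)))"
proof -
  let ?G = "std_gauss_vec n"
  interpret prob_space ?G by (rule prob_space_std_gauss_vec)
  let ?nA = "\<lambda>i j. - A i j"
  let ?E = "\<lambda>B. {z \<in> space ?G. t \<le> quad_form n B z - mat_trace n B}"
  have pos: "0 < real n * M" using t by linarith
  then have "0 \<le> M" by (simp add: zero_less_mult_iff)
  have tail: "measure ?G (?E B) \<le> exp (- t\<^sup>2 / (16 * (real n * M\<^sup>2)))"
    if B: "op_norm n B \<le> M" for B
  proof (rule prob_centered_quad_form_ge)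
    show "\<forall>u. \<bar>quad_form n B u\<bar> \<le> M * vec_sq_norm n u"
      using abs_quad_form_le_op_norm order_trans mult_right_mono[OF B vec_sq_norm_nonneg] by blast
    have "(op_norm n B)\<^sup>2 \<le> M\<^sup>2" using B op_norm_nonneg by (intro power_mono)
    then show "frob_sq n B \<le> real n * M\<^sup>2"
      using frob_sq_le_op_norm[of n B] mult_left_mono[of _ _ "real n"] by fastforce
    show "t * M \<le> real n * M\<^sup>2"
      using mult_right_mono[OF t(2) \<open>0 \<le> M\<close>] by (simp add: power2_eq_square mult.assoc)
  qed (use t pos \<open>0 \<le> M\<close> in \<open>simp_all add: zero_less_mult_iff\<close>)
  have events: "?E B \<in> events" for B
    using measurable_centered_quad_form[of n B "mat_trace n B"] unfolding borel_measurable_iff_ge by blast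
  have "{z \<in> space ?G. t \<le> \<bar>quad_form n A z - mat_trace n A\<bar>} \<subseteq> ?E A \<union> ?E ?nA"
    unfolding quad_form_neg mat_trace_neg by auto
  then have "measure ?G {z \<in> space ?G. t \<le> \<bar>quad_form n A z - mat_trace n A\<bar>}
      \<le> measure ?G (?E A) + measure ?G (?E ?nA)"
    using events by (intro order.trans[OF finite_measure_mono measure_Un_le]) auto
  also have "\<dots> \<le> 2 * exp (- t\<^sup>2 / (16 * (real n * M\<^sup>2)))"
    using tail[OF M] tail[of ?nA] M unfolding op_norm_neg by simp
  finally show ?thesis .
qed

lemma prob_vec_sq_norm_ge:
  assumes "1 \<le> n"
  shows "measure (std_gauss_vec n) {z \<in> space (std_gauss_vec n). 2 * real n \<le> vec_sq_norm n z}
          \<le> 16 / real n"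
proof -
  define I :: "nat \<Rightarrow> nat \<Rightarrow> real" where "I = (\<lambda>i j. if i = j then 1 else 0)"
  have qI: "quad_form n I z = vec_sq_norm n z" for z
    unfolding quad_form_def vec_sq_norm_def I_def
    by (simp add: if_distrib[of "\<lambda>x. _ * x"] if_distrib[of "\<lambda>x. x * _"] sum.delta
        power2_eq_square cong: if_cong)
  have "frob_sq n I = real n"
    unfolding frob_sq_def I_def by (simp add: if_distrib[of "\<lambda>x. x\<^sup>2"] sum.delta cong: if_cong)
  then have "measure (std_gauss_vec n) {z \<in> space (std_gauss_vec n). real n \<le> quad_form n I z - mat_trace n I}
     \<le> exp (- (real n)\<^sup>2 / (16 * real n))"
    using assms by (intro prob_centered_quad_form_ge[where K = 1]) (auto simp: qI vec_sq_norm_nonneg)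
  moreover have "mat_trace n I = real n" unfolding mat_trace_def I_def by simp
  moreover have "exp (- (real n)\<^sup>2 / (16 * real n)) \<le> 16 / real n"
  proof -
    have "real n / 16 \<le> exp (real n / 16)" using exp_ge_add_one_self[of "real n / 16"] by linarith
    then have "real n / 16 * exp (- real n / 16) \<le> 1"
      using mult_right_mono[of _ _ "exp (- real n / 16)"] by (simp add: exp_minus field_simps)
    then show ?thesis using assms by (simp add: power2_eq_square field_simps)
  qed
  ultimately show ?thesis unfolding qI by (simp add: algebra_simps)
qed

section \<open>Uniformity over the parameter set\<close>

lemma norm_le_of_floor_scale_eq:
  fixes \<theta> \<theta>' :: "real ^ 'm"
  assumes s: "0 < s" and eq: "\<And>i. \<lfloor>\<theta>$i * s\<rfloor> = \<lfloor>\<theta>'$i * s\<rfloor>"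
  shows "norm (\<theta> - \<theta>') \<le> real CARD('m) / s"
proof -
  have "\<bar>(\<theta> - \<theta>')$i\<bar> \<le> 1 / s" for i
  proof -
    have "\<bar>\<theta>$i * s - \<theta>'$i * s\<bar> < 1"
      using eq[of i] floor_correct[of "\<theta>$i * s"] floor_correct[of "\<theta>'$i * s"] by linarith
    then have "\<bar>\<theta>$i - \<theta>'$i\<bar> * s < 1"
      using s by (metis abs_mult abs_of_pos left_diff_distrib)
    then show ?thesis using s by (simp add: field_simps)
  qed
  then have "(\<Sum>i\<in>UNIV. \<bar>(\<theta> - \<theta>')$i\<bar>) \<le> real CARD('m) * (1 / s)"
    using sum_bounded_above[of UNIV "\<lambda>i. \<bar>(\<theta> - \<theta>')$i\<bar>" "1 / s"] by simp
  then show ?thesis using norm_le_l1_cart[of "\<theta> - \<theta>'"] by simp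
qed

lemma floor_scale_in_box:
  fixes \<theta> :: "real ^ 'm"
  assumes "norm \<theta> \<le> R" and "0 \<le> s"
  shows "(\<lambda>i. \<lfloor>\<theta>$i * s\<rfloor>) \<in> Pi\<^sub>E UNIV (\<lambda>_. {-(\<lceil>R * s\<rceil> + 1)..\<lceil>R * s\<rceil> + 1})"
proof -
  have "\<lfloor>\<theta>$i * s\<rfloor> \<in> {-(\<lceil>R * s\<rceil> + 1)..\<lceil>R * s\<rceil> + 1}" for i
  proof -
    have "\<bar>\<theta>$i\<bar> \<le> R" using component_le_norm_cart[of \<theta> i] assms(1) by linarith
    then have "\<bar>\<theta>$i * s\<bar> \<le> R * s" using assms(2) by (simp add: abs_mult mult_right_mono)
    then show ?thesis
      using floor_correct[of "\<theta>$i * s"] le_of_int_ceiling[of "R * s"] by (simp add: abs_le_iff) linarith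
  qed
  then show ?thesis by (simp add: PiE_UNIV_domain)
qed

lemma finite_net_cart:
  fixes \<Theta> :: "(real ^ 'm) set"
  assumes R: "\<forall>\<theta>\<in>\<Theta>. norm \<theta> \<le> R" "0 \<le> R" and s: "1 \<le> s"
  shows "\<exists>N. finite N \<and> N \<subseteq> \<Theta> \<and> real (card N) \<le> ((2 * R + 5) * s) ^ CARD('m)
           \<and> (\<forall>\<theta>\<in>\<Theta>. \<exists>\<theta>'\<in>N. norm (\<theta> - \<theta>') \<le> real CARD('m) / s)"
proof -
  define r where "r = (\<lambda>\<theta>::real^'m. \<lambda>i. \<lfloor>\<theta>$i * s\<rfloor>)"
  define L where "L = \<lceil>R * s\<rceil> + 1"
  define box where "box = Pi\<^sub>E (UNIV :: 'm set) (\<lambda>_. {-L..L})"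
  define N where "N = inv_into \<Theta> r ` r ` \<Theta>"
  have "r \<theta> \<in> box" if "\<theta> \<in> \<Theta>" for \<theta>
    using floor_scale_in_box[of \<theta> R s] R(1) that s unfolding r_def box_def L_def by simp
  then have box: "r ` \<Theta> \<subseteq> box" "finite box" unfolding box_def by (auto intro!: finite_PiE)
  have "real (nat (2 * L + 1)) \<le> (2 * R + 5) * s"
  proof -
    have "real_of_int \<lceil>R * s\<rceil> \<le> R * s + 1" using ceiling_correct[of "R * s"] by linarith
    moreover have "0 \<le> R * s" using R s by simp
    then have "0 \<le> \<lceil>R * s\<rceil>" by simp
    ultimately show ?thesis using s R unfolding L_def by (simp add: algebra_simps)
  qed
  then have "real (card box) \<le> ((2 * R + 5) * s) ^ CARD('m)"
    unfolding box_def by (simp add: card_PiE power_mono)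
  moreover have "card N \<le> card box"
    unfolding N_def using box by (intro order_trans[OF card_image_le card_mono]) (auto intro: finite_subset)
  moreover have "\<exists>\<theta>'\<in>N. norm (\<theta> - \<theta>') \<le> real CARD('m) / s" if "\<theta> \<in> \<Theta>" for \<theta>
  proof
    show "inv_into \<Theta> r (r \<theta>) \<in> N" unfolding N_def using that by auto
    have "r (inv_into \<Theta> r (r \<theta>)) = r \<theta>" using that by (simp add: f_inv_into_f)
    then show "norm (\<theta> - inv_into \<Theta> r (r \<theta>)) \<le> real CARD('m) / s"
      using s by (intro norm_le_of_floor_scale_eq) (auto simp: r_def fun_eq_iff)
  qed
  moreover have "finite N" "N \<subseteq> \<Theta>"
    unfolding N_def using box by (auto intro: finite_subset inv_into_into)
  ultimately show ?thesis by (intro exI[of _ N]) (auto intro: order.trans)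
qed

lemma SUP_abs_centered_quad_form_le:
  fixes A :: "'a::real_normed_vector \<Rightarrow> nat \<Rightarrow> nat \<Rightarrow> real"
  assumes lip: "\<forall>\<theta>1\<in>\<Theta>. \<forall>\<theta>2\<in>\<Theta>. op_norm n (\<lambda>i j. A \<theta>2 i j - A \<theta>1 i j) \<le> C * norm (\<theta>2 - \<theta>1)"
    and C: "0 \<le> C"
    and net: "N \<subseteq> \<Theta>" "\<forall>\<theta>\<in>\<Theta>. \<exists>\<theta>'\<in>N. norm (\<theta> - \<theta>') \<le> \<delta>"
    and small: "\<forall>\<theta>'\<in>N. \<bar>quad_form n (A \<theta>') z - mat_trace n (A \<theta>')\<bar> \<le> t"
  shows "(SUP \<theta>\<in>\<Theta>. ereal \<bar>quad_form n (A \<theta>) z - mat_trace n (A \<theta>)\<bar>)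
           \<le> ereal (t + C * \<delta> * (vec_sq_norm n z + real n))"
proof (rule SUP_least)
  fix \<theta> assume "\<theta> \<in> \<Theta>"
  then obtain \<theta>' where \<theta>': "\<theta>' \<in> N" "norm (\<theta> - \<theta>') \<le> \<delta>" using net(2) by blast
  let ?Q = "\<lambda>\<theta>. quad_form n (A \<theta>) z - mat_trace n (A \<theta>)"
  have "op_norm n (\<lambda>i j. A \<theta> i j - A \<theta>' i j) \<le> C * \<delta>"
    using lip \<open>\<theta> \<in> \<Theta>\<close> \<theta>' net(1) C by (meson mult_left_mono order_trans subsetD)
  then have "\<bar>?Q \<theta> - ?Q \<theta>'\<bar> \<le> C * \<delta> * (vec_sq_norm n z + real n)"
    using abs_centered_quad_form_diff_le[of n "A \<theta>" z "A \<theta>'"] vec_sq_norm_nonneg[of n z]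
    by (meson add_nonneg_nonneg mult_right_mono of_nat_0_le_iff order_trans)
  then show "ereal \<bar>?Q \<theta>\<bar> \<le> ereal (t + C * \<delta> * (vec_sq_norm n z + real n))"
    using small \<theta>'(1) by force
qed

lemma SUP_abs_centered_quad_form_le_grid:
  fixes A :: "'a::real_normed_vector \<Rightarrow> nat \<Rightarrow> nat \<Rightarrow> real"
  assumes lip: "\<forall>\<theta>1\<in>\<Theta>. \<forall>\<theta>2\<in>\<Theta>. op_norm n (\<lambda>i j. A \<theta>2 i j - A \<theta>1 i j) \<le> C * norm (\<theta>2 - \<theta>1)"
    and C: "0 \<le> C" and n: "1 \<le> n"
    and net: "N \<subseteq> \<Theta>" "\<forall>\<theta>\<in>\<Theta>. \<exists>\<theta>'\<in>N. norm (\<theta> - \<theta>') \<le> real d / real n"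
    and small: "\<forall>\<theta>'\<in>N. \<bar>quad_form n (A \<theta>') z - mat_trace n (A \<theta>')\<bar> \<le> t"
    and z: "vec_sq_norm n z \<le> 2 * real n"
  shows "(SUP \<theta>\<in>\<Theta>. ereal \<bar>quad_form n (A \<theta>) z - mat_trace n (A \<theta>)\<bar>) \<le> ereal (t + 3 * C * real d)"
proof -
  have "C * (real d / real n) * (vec_sq_norm n z + real n) \<le> C * (real d / real n) * (3 * real n)"
    using C z by (intro mult_left_mono) auto
  also have "\<dots> = 3 * C * real d" using n by simp
  finally have "ereal (t + C * (real d / real n) * (vec_sq_norm n z + real n)) \<le> ereal (t + 3 * C * real d)"
    by simp
  with SUP_abs_centered_quad_form_le[OF lip C net small] show ?thesis by (rule order.trans)
qed

lemma measurable_vec_sq_norm: "vec_sq_norm n \<in> borel_measurable (std_gauss_vec n)"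
  unfolding vec_sq_norm_def std_gauss_vec_def
  by (intro borel_measurable_sum borel_measurable_power measurable_component_std_gauss) auto

lemma prob_SUP_abs_centered_quad_form_ge:
  fixes \<Theta> :: "(real ^ 'm) set" and A :: "real ^ 'm \<Rightarrow> nat \<Rightarrow> nat \<Rightarrow> real"
  assumes opM: "\<forall>\<theta>\<in>\<Theta>. op_norm n (A \<theta>) \<le> M"
    and lip: "\<forall>\<theta>1\<in>\<Theta>. \<forall>\<theta>2\<in>\<Theta>. op_norm n (\<lambda>i j. A \<theta>2 i j - A \<theta>1 i j) \<le> C * norm (\<theta>2 - \<theta>1)"
    and C: "0 \<le> C" and R: "\<forall>\<theta>\<in>\<Theta>. norm \<theta> \<le> R" "0 \<le> R"
    and n: "1 \<le> n" and t: "0 < t" "t \<le> real n * M" and c: "t + 3 * C * CARD('m) < c"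
  shows "measure (std_gauss_vec n) {z \<in> space (std_gauss_vec n).
           ereal c \<le> (SUP \<theta>\<in>\<Theta>. ereal \<bar>quad_form n (A \<theta>) z - mat_trace n (A \<theta>)\<bar>)}
         \<le> 2 * ((2 * R + 5) * real n) ^ CARD('m) * exp (- t\<^sup>2 / (16 * (real n * M\<^sup>2))) + 16 / real n"
proof -
  let ?G = "std_gauss_vec n"
  interpret prob_space ?G by (rule prob_space_std_gauss_vec)
  let ?d = "CARD('m)"
  let ?Q = "\<lambda>\<theta> z. quad_form n (A \<theta>) z - mat_trace n (A \<theta>)"
  obtain N where N: "finite N" "N \<subseteq> \<Theta>" "real (card N) \<le> ((2 * R + 5) * real n) ^ ?d"
    "\<forall>\<theta>\<in>\<Theta>. \<exists>\<theta>'\<in>N. norm (\<theta> - \<theta>') \<le> real ?d / real n"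
    using finite_net_cart[OF R, of "real n"] n by auto
  define S where "S = (\<lambda>\<theta>'. {z \<in> space ?G. t \<le> \<bar>?Q \<theta>' z\<bar>})"
  define V where "V = {z \<in> space ?G. 2 * real n \<le> vec_sq_norm n z}"
  have S_events: "S \<theta>' \<in> events" for \<theta>'
    using borel_measurable_abs[OF measurable_centered_quad_form[of n "A \<theta>'" "mat_trace n (A \<theta>')"]]
    unfolding S_def borel_measurable_iff_ge by blast
  have V_events: "V \<in> events"
    using measurable_vec_sq_norm unfolding V_def borel_measurable_iff_ge by blast
  have S_bound: "(\<Sum>\<theta>'\<in>N. measure ?G (S \<theta>')) \<le> real (card N) * (2 * exp (- t\<^sup>2 / (16 * (real n * M\<^sup>2))))"
  proof (rule sum_bounded_above)
    fix \<theta>' assume "\<theta>' \<in> N"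
    then have "op_norm n (A \<theta>') \<le> M" using opM N(2) by blast
    then show "measure ?G (S \<theta>') \<le> 2 * exp (- t\<^sup>2 / (16 * (real n * M\<^sup>2)))"
      unfolding S_def by (rule prob_abs_centered_quad_form_ge[OF _ t])
  qed
  have "{z \<in> space ?G. ereal c \<le> (SUP \<theta>\<in>\<Theta>. ereal \<bar>?Q \<theta> z\<bar>)} \<subseteq> (\<Union>\<theta>'\<in>N. S \<theta>') \<union> V"
  proof (rule subsetI, rule ccontr)
    fix z assume z: "z \<in> {z \<in> space ?G. ereal c \<le> (SUP \<theta>\<in>\<Theta>. ereal \<bar>?Q \<theta> z\<bar>)}"
      and "z \<notin> (\<Union>\<theta>'\<in>N. S \<theta>') \<union> V"
    then have "\<forall>\<theta>'\<in>N. \<bar>?Q \<theta>' z\<bar> \<le> t" and "vec_sq_norm n z \<le> 2 * real n"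
      unfolding S_def V_def by auto
    then have "(SUP \<theta>\<in>\<Theta>. ereal \<bar>?Q \<theta> z\<bar>) \<le> ereal (t + 3 * C * real ?d)"
      by (rule SUP_abs_centered_quad_form_le_grid[OF lip C n N(2,4)])
    with z have "ereal c \<le> ereal (t + 3 * C * real ?d)" by (blast intro: order.trans)
    then show False using c by simp
  qed
  then have "measure ?G {z \<in> space ?G. ereal c \<le> (SUP \<theta>\<in>\<Theta>. ereal \<bar>?Q \<theta> z\<bar>)}
      \<le> measure ?G ((\<Union>\<theta>'\<in>N. S \<theta>') \<union> V)"
    using S_events V_events N(1) by (intro finite_measure_mono sets.Un sets.finite_UN) auto
  also have "\<dots> \<le> measure ?G (\<Union>\<theta>'\<in>N. S \<theta>') + measure ?G V"
    using S_events V_events N(1) by (intro measure_Un_le sets.finite_UN) auto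
  also have "\<dots> \<le> (\<Sum>\<theta>'\<in>N. measure ?G (S \<theta>')) + 16 / real n"
    using S_events N(1) prob_vec_sq_norm_ge[OF n] unfolding V_def
    by (intro add_mono finite_measure_subadditive_finite) auto
  also have "\<dots> \<le> 2 * ((2 * R + 5) * real n) ^ ?d * exp (- t\<^sup>2 / (16 * (real n * M\<^sup>2))) + 16 / real n"
    using order.trans[OF S_bound mult_right_mono[OF N(3)]] by simp
  finally show ?thesis .
qed

lemma exp_gauss_tail_exponent:
  assumes "0 < M" and "1 \<le> n"
  shows "exp (- (M * (4 * sqrt (real k)) * sqrt (real n * ln (real n)))\<^sup>2 / (16 * (real n * M\<^sup>2)))
       = 1 / real n ^ k"
proof -
  have "0 \<le> real n * ln (real n)" using assms(2) by simp
  then have "(M * (4 * sqrt (real k)) * sqrt (real n * ln (real n)))\<^sup>2 / (16 * (real n * M\<^sup>2))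
      = real k * ln (real n)"
    using assms by (simp add: power_mult_distrib)
  moreover have "exp (real k * ln (real n)) = real n ^ k"
    using assms(2) by (simp add: exp_of_nat_mult)
  ultimately show ?thesis by (simp add: exp_minus inverse_eq_divide)
qed

lemma eventually_sqrt_n_ln_n_bounds:
  assumes "0 < a" "0 < c"
  shows "eventually (\<lambda>n. b < c * sqrt (real n * ln (real n)) \<and> a * sqrt (real n * ln (real n)) \<le> real n)
           sequentially"
proof -
  have "(\<lambda>n. sqrt (real n * ln (real n)) / real n) \<longlonglongrightarrow> 0" by real_asymp
  then have small: "eventually (\<lambda>n. sqrt (real n * ln (real n)) / real n < 1 / a) sequentially"
    using assms by (intro order_tendstoD(2)) auto
  have "filterlim (\<lambda>n. sqrt (real n * ln (real n))) at_top sequentially" by real_asymp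
  then have large: "eventually (\<lambda>n. b / c < sqrt (real n * ln (real n))) sequentially"
    by (simp add: filterlim_at_top_dense)
  show ?thesis using small large eventually_ge_at_top[of 1]
  proof eventually_elim
    case (elim n)
    then have "a * sqrt (real n * ln (real n)) < real n"
      using assms by (simp add: field_simps)
    then show ?case using elim(2) assms by (simp add: field_simps)
  qed
qed

text \<open>At level \<open>t = 4 M \<surd>(d + 1) \<surd>(n ln n)\<close> each of the \<open>O(n\<^sup>d)\<close> grid points contributes
  \<open>2 exp(-t\<^sup>2/(16 n M\<^sup>2)) = 2 n\<^sup>-\<^sup>(\<^sup>d\<^sup>+\<^sup>1\<^sup>)\<close>.\<close>

lemma prob_SUP_abs_centered_quad_form_ge_sqrt_n_ln_n:
  fixes \<Theta> :: "(real ^ 'm) set" and A :: "real ^ 'm \<Rightarrow> nat \<Rightarrow> nat \<Rightarrow> real"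
  assumes opM: "\<forall>\<theta>\<in>\<Theta>. op_norm n (A \<theta>) \<le> M" and M: "0 < M"
    and lip: "\<forall>\<theta>1\<in>\<Theta>. \<forall>\<theta>2\<in>\<Theta>. op_norm n (\<lambda>i j. A \<theta>2 i j - A \<theta>1 i j) \<le> C * norm (\<theta>2 - \<theta>1)"
    and C: "0 \<le> C" and R: "\<forall>\<theta>\<in>\<Theta>. norm \<theta> \<le> R" "0 \<le> R" and n: "1 \<le> n"
    and large: "3 * C * CARD('m) < 4 * M * sqrt (real (CARD('m) + 1)) * sqrt (real n * ln (real n))"
    and small: "4 * sqrt (real (CARD('m) + 1)) * sqrt (real n * ln (real n)) \<le> real n"
  shows "measure (std_gauss_vec n) {z \<in> space (std_gauss_vec n).
           ereal (8 * M * sqrt (real (CARD('m) + 1)) * sqrt (real n * ln (real n)))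
             \<le> (SUP \<theta>\<in>\<Theta>. ereal \<bar>quad_form n (A \<theta>) z - mat_trace n (A \<theta>)\<bar>)}
         \<le> (2 * (2 * R + 5) ^ CARD('m) + 16) / real n"
proof -
  define d where "d = CARD('m)"
  define t where "t = M * (4 * sqrt (real (d + 1))) * sqrt (real n * ln (real n))"
  have "0 \<le> 3 * C * real d" using C by simp
  moreover have "3 * C * real d < t" using large unfolding t_def d_def by (simp add: mult_ac)
  moreover have "2 * t = 8 * M * sqrt (real (d + 1)) * sqrt (real n * ln (real n))"
    unfolding t_def by simp
  ultimately have t: "0 < t" "t + 3 * C * d < 8 * M * sqrt (real (d + 1)) * sqrt (real n * ln (real n))"
    by linarith+
  have "t \<le> real n * M" using mult_left_mono[OF small, of M] M unfolding t_def d_def by (simp add: mult_ac)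
  have "measure (std_gauss_vec n) {z \<in> space (std_gauss_vec n).
           ereal (8 * M * sqrt (real (d + 1)) * sqrt (real n * ln (real n)))
             \<le> (SUP \<theta>\<in>\<Theta>. ereal \<bar>quad_form n (A \<theta>) z - mat_trace n (A \<theta>)\<bar>)}
      \<le> 2 * ((2 * R + 5) * real n) ^ d * exp (- t\<^sup>2 / (16 * (real n * M\<^sup>2))) + 16 / real n"
    using prob_SUP_abs_centered_quad_form_ge[OF opM lip C R n t(1) \<open>t \<le> real n * M\<close>] t(2)
    unfolding d_def by simp
  also have "exp (- t\<^sup>2 / (16 * (real n * M\<^sup>2))) = 1 / real n ^ (d + 1)"
    unfolding t_def by (rule exp_gauss_tail_exponent[OF M n])
  also have "2 * ((2 * R + 5) * real n) ^ d * (1 / real n ^ (d + 1)) + 16 / real n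
      = (2 * (2 * R + 5) ^ d + 16) / real n"
    using n by (simp add: power_mult_distrib add_divide_distrib)
  finally show ?thesis unfolding d_def .
qed

theorem proposition7:
  fixes \<Theta> :: "(real ^ 'm) set"
    and Pi_n :: "nat \<Rightarrow> real ^ 'm \<Rightarrow> (nat \<Rightarrow> nat \<Rightarrow> real)"
  assumes bdd: "bounded \<Theta>"
    and a: "\<exists>M. \<forall>n. \<forall>\<theta>\<in>\<Theta>. op_norm n (Pi_n n \<theta>) \<le> M"
    and b: "\<exists>C>0. \<forall>n. \<forall>\<theta>1\<in>\<Theta>. \<forall>\<theta>2\<in>\<Theta>.
              op_norm n (\<lambda>i j. Pi_n n \<theta>2 i j - Pi_n n \<theta>1 i j) \<le> C * norm (\<theta>2 - \<theta>1)"
    and c: "\<forall>\<theta>\<in>\<Theta>. (\<lambda>n. op_norm n (Pi_n n \<theta>) / frob_norm n (Pi_n n \<theta>))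
              \<in> o(\<lambda>n. 1 / sqrt (ln (real n)))"
  shows "\<exists>C'>0. (\<lambda>n. measure (std_gauss_vec n)
            {z \<in> space (std_gauss_vec n).
               (SUP \<theta>\<in>\<Theta>. ereal \<bar>quad_form n (Pi_n n \<theta>) z - mat_trace n (Pi_n n \<theta>)\<bar>)
                 \<ge> ereal (C' * sqrt (real n * ln (real n)))})
          \<longlonglongrightarrow> 0"
proof -
  obtain M0 where M0: "\<forall>n. \<forall>\<theta>\<in>\<Theta>. op_norm n (Pi_n n \<theta>) \<le> M0" using a by blast
  obtain C where C: "0 < C" "\<forall>n. \<forall>\<theta>1\<in>\<Theta>. \<forall>\<theta>2\<in>\<Theta>.
      op_norm n (\<lambda>i j. Pi_n n \<theta>2 i j - Pi_n n \<theta>1 i j) \<le> C * norm (\<theta>2 - \<theta>1)"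
    using b by blast
  obtain R0 where R0: "\<forall>\<theta>\<in>\<Theta>. norm \<theta> \<le> R0" using bdd unfolding bounded_iff by blast
  define M where "M = max M0 1"
  define R where "R = max R0 0"
  define d where "d = CARD('m)"
  have M: "0 < M" "\<forall>n. \<forall>\<theta>\<in>\<Theta>. op_norm n (Pi_n n \<theta>) \<le> M"
    using M0 unfolding M_def by (auto intro: le_max_iff_disj[THEN iffD2])
  have R: "\<forall>\<theta>\<in>\<Theta>. norm \<theta> \<le> R" "0 \<le> R"
    using R0 unfolding R_def by (auto intro: le_max_iff_disj[THEN iffD2])
  let ?P = "\<lambda>n. measure (std_gauss_vec n) {z \<in> space (std_gauss_vec n).
     ereal (8 * M * sqrt (real (d + 1)) * sqrt (real n * ln (real n)))
       \<le> (SUP \<theta>\<in>\<Theta>. ereal \<bar>quad_form n (Pi_n n \<theta>) z - mat_trace n (Pi_n n \<theta>)\<bar>)}"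
  have pos: "0 < 4 * sqrt (real (d + 1))" "0 < 4 * M * sqrt (real (d + 1))" using M(1) by simp_all
  have "eventually (\<lambda>n. ?P n \<le> (2 * (2 * R + 5) ^ d + 16) / real n) sequentially"
    using eventually_sqrt_n_ln_n_bounds[OF pos, of "3 * C * d"] eventually_ge_at_top[of 1]
    unfolding d_def
    by eventually_elim
      (rule prob_SUP_abs_centered_quad_form_ge_sqrt_n_ln_n[OF M(2)[THEN spec] M(1) C(2)[THEN spec]
          less_imp_le[OF C(1)] R]; simp)
  moreover have "eventually (\<lambda>n. 0 \<le> ?P n) sequentially"
    by (intro always_eventually allI measure_nonneg)
  ultimately have "?P \<longlonglongrightarrow> 0"
    by (intro tendsto_sandwich[OF _ _ tendsto_const lim_const_over_n])
  then show ?thesis using M(1) by (intro exI[of _ "8 * M * sqrt (real (d + 1))"]) simp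
qed

end
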